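(* Let $S=\begin{pmatrix}A&B\\C&D\end{pmatrix}\in\mathrm{Sp}(d,\mathbb R)$. Then $\mathbb R^d=R(B)\oplus A(\ker(B))$.
   Context: $\mathrm{Sp}(d,\mathbb R)$ is the group of real $2d\times 2d$ matrices $S$ with $S^TJS=J$, $J=\begin{pmatrix}0_d&I_d\\-I_d&0_d\end{pmatrix}$, written in $d\times d$ blocks $A,B,C,D$. $R(B)$ is the range and $\ker(B)$ the kernel of $B$; $\oplus$ denotes a (not necessarily orthogonal) direct sum. *)

theory Defs
  imports "HOL-Analysis.Analysis"
begin

text \<open>Block matrix [[A,B],[C,D]] of size 2d x 2d, indexed by the finite sum type 'n + 'n
  (first summand = first d coordinates, second summand = last d coordinates).\<close>
definition block_mat ::
  "real^'n^'n \<Rightarrow> real^'n^'n \<Rightarrow> real^'n^'n \<Rightarrow> real^'n^'n \<Rightarrow> real^('n::finite + 'n)^('n + 'n)" where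
  "block_mat A B C D = (\<chi> i j. case i of
       Inl i' \<Rightarrow> (case j of Inl j' \<Rightarrow> A $ i' $ j' | Inr j' \<Rightarrow> B $ i' $ j')
     | Inr i' \<Rightarrow> (case j of Inl j' \<Rightarrow> C $ i' $ j' | Inr j' \<Rightarrow> D $ i' $ j'))"

definition symp_J :: "real^('n::finite + 'n)^('n + 'n)" where
  "symp_J = block_mat 0 (mat 1) (- mat 1) 0"

definition symplectic :: "real^('n::finite + 'n)^('n + 'n) \<Rightarrow> bool" where
  "symplectic S \<longleftrightarrow> transpose S ** symp_J ** S = symp_J"

definition mat_range :: "real^'n^'m \<Rightarrow> (real^'m) set" where
  "mat_range M = range (\<lambda>x. M *v x)"

definition mat_ker :: "real^'n^'m \<Rightarrow> (real^'n) set" where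
  "mat_ker M = {x. M *v x = 0}"

definition direct_sum_of :: "'a::real_vector set \<Rightarrow> 'a set \<Rightarrow> 'a set \<Rightarrow> bool" where
  "direct_sum_of V U W \<longleftrightarrow> subspace U \<and> subspace W \<and> U \<inter> W = {0} \<and>
      V = {u + w | u w. u \<in> U \<and> w \<in> W}"

end

theory Submission
  imports Defs
begin

text \<open>Comparing blocks of \<open>S\<^sup>T J S = J\<close> gives \<open>D\<^sup>T A - B\<^sup>T C = I\<close> and
  \<open>B\<^sup>T D = D\<^sup>T B\<close>. If \<open>x \<in> ker B\<close> and \<open>A x = B z\<close>, then
  \<open>x = D\<^sup>T A x - B\<^sup>T C x = D\<^sup>T B z - B\<^sup>T C x = B\<^sup>T (D z - C x)\<close> lies in
  \<open>R(B\<^sup>T) = ker(B)\<^sup>\<bottom>\<close>, so \<open>x = 0\<close>. Thus \<open>A\<close> is injective on \<open>ker B\<close> and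
  \<open>R(B) \<inter> A(ker B) = 0\<close>; by rank-nullity the dimensions of \<open>R(B)\<close> and \<open>A(ker B)\<close>
  add up to \<open>d\<close>, so the sum is all of \<open>\<real>\<^sup>d\<close>.\<close>

lemma sum_UNIV_Plus:
  "(\<Sum>x\<in>(UNIV::('a::finite + 'b::finite) set). f x) = (\<Sum>x\<in>UNIV. f (Inl x)) + (\<Sum>x\<in>UNIV. f (Inr x))"
  by (simp flip: UNIV_Plus_UNIV add: sum.Plus comp_def)

lemma symp_J_mult_entry:
  fixes S :: "real^'m^('n::finite + 'n)"
  shows "(symp_J ** S) $ Inl k $ j = S $ Inr k $ j" "(symp_J ** S) $ Inr k $ j = - S $ Inl k $ j"
  by (simp_all add: matrix_matrix_mult_def symp_J_def block_mat_def mat_def sum_UNIV_Plus sum_negf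
      if_distrib[of "\<lambda>x. x * _"] cong: if_cong)

lemma transpose_symp_J_mult_entry:
  fixes S :: "real^('n::finite + 'n)^('n + 'n)"
  shows "(transpose S ** symp_J ** S) $ i $ j =
    (\<Sum>k\<in>UNIV. S $ Inl k $ i * S $ Inr k $ j - S $ Inr k $ i * S $ Inl k $ j)"
proof -
  have "(transpose S ** symp_J ** S) $ i $ j = (\<Sum>l\<in>UNIV. S $ l $ i * (symp_J ** S) $ l $ j)"
    unfolding matrix_mul_assoc[symmetric] unfolding matrix_matrix_mult_def[of "transpose S"]
    by (simp add: transpose_def)
  then show ?thesis
    by (simp add: sum_UNIV_Plus symp_J_mult_entry sum_negf sum_subtractf)
qed

lemma symplectic_blockD:
  fixes A B C D :: "real^'n::finite^'n"
  assumes "symplectic (block_mat A B C D)"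
  shows "transpose D ** A - transpose B ** C = mat 1"
    and "transpose B ** D = transpose D ** B"
proof -
  have entry: "(\<Sum>k\<in>UNIV. block_mat A B C D $ Inl k $ i * block_mat A B C D $ Inr k $ j
      - block_mat A B C D $ Inr k $ i * block_mat A B C D $ Inl k $ j) = symp_J $ i $ j" for i j
    using assms by (simp flip: transpose_symp_J_mult_entry add: symplectic_def)
  show "transpose D ** A - transpose B ** C = mat 1"
    using entry[of "Inr _" "Inl _"]
    by (simp add: vec_eq_iff matrix_matrix_mult_def transpose_def mat_def block_mat_def symp_J_def
        sum_subtractf algebra_simps)
  show "transpose B ** D = transpose D ** B"
    using entry[of "Inr _" "Inr _"]
    by (simp add: vec_eq_iff matrix_matrix_mult_def transpose_def block_mat_def symp_J_def
        sum_subtractf algebra_simps)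
qed

lemma subspace_mat_range: "subspace (mat_range B)"
  unfolding mat_range_def by (rule linear_subspace_image) (auto simp: subspace_UNIV)

lemma subspace_mat_ker: "subspace (mat_ker B)"
  unfolding mat_ker_def by (rule linear_subspace_kernel) simp

lemma mat_ker_iff_orthogonal_range_transpose:
  fixes B :: "real^'n^'m"
  shows "x \<in> mat_ker B \<longleftrightarrow> (\<forall>y \<in> mat_range (transpose B). orthogonal y x)"
proof -
  have "orthogonal (transpose B *v w) x \<longleftrightarrow> w \<bullet> (B *v x) = 0" for w
    by (simp add: orthogonal_def dot_lmul_matrix)
  then have "(\<forall>y \<in> mat_range (transpose B). orthogonal y x) \<longleftrightarrow> (\<forall>w. w \<bullet> (B *v x) = 0)"
    by (simp add: mat_range_def)
  also have "\<dots> \<longleftrightarrow> B *v x = 0"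
    by (auto dest: spec[of _ "B *v x"])
  finally show ?thesis
    by (simp add: mat_ker_def)
qed

lemma mat_ker_Int_range_transpose:
  fixes B :: "real^'n^'m"
  shows "mat_ker B \<inter> mat_range (transpose B) = {0}"
proof -
  have "x = 0" if "x \<in> mat_ker B" "x \<in> mat_range (transpose B)" for x
  proof -
    have "orthogonal x x"
      using that mat_ker_iff_orthogonal_range_transpose[of x B] by blast
    then show ?thesis by (simp add: orthogonal_def)
  qed
  then show ?thesis
    using subspace_0[OF subspace_mat_ker] subspace_0[OF subspace_mat_range] by blast
qed

lemma dim_mat_ker_add_dim_mat_range:
  fixes B :: "real^'n^'m"
  shows "dim (mat_ker B) + dim (mat_range B) = CARD('n)"
proof -
  have "mat_ker B = {x \<in> UNIV. \<forall>y \<in> mat_range (transpose B). orthogonal y x}"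
    using mat_ker_iff_orthogonal_range_transpose by blast
  then have "dim (mat_ker B) + dim (mat_range (transpose B)) = CARD('n)"
    using dim_subspace_orthogonal_to_vectors[OF subspace_mat_range subspace_UNIV] by simp
  moreover have "dim (mat_range (transpose B)) = dim (mat_range B)"
    using rank_transpose[of B] by (simp add: mat_range_def rank_dim_range)
  ultimately show ?thesis by simp
qed

lemma direct_sum_of_UNIV_by_dim:
  fixes U W :: "'a::euclidean_space set"
  assumes "subspace U" "subspace W" "U \<inter> W = {0}" "dim U + dim W = DIM('a)"
  shows "direct_sum_of UNIV U W"
proof -
  let ?V = "{u + w | u w. u \<in> U \<and> w \<in> W}"
  have "dim ?V = DIM('a)"
    using dim_sums_Int[OF assms(1,2)] assms(3,4) by simp
  then have "?V = UNIV"
    using subspace_dim_equal[OF subspace_sums[OF assms(1,2)] subspace_UNIV] by simp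
  then show ?thesis
    using assms(1-3) by (simp add: direct_sum_of_def)
qed

lemma symplectic_block_ker_range_trivial:
  fixes A B C D :: "real^'n::finite^'n"
  assumes "symplectic (block_mat A B C D)" "B *v x = 0" "A *v x = B *v z"
  shows "x = 0"
proof -
  note block = symplectic_blockD[OF assms(1)]
  have "x = (transpose D ** A - transpose B ** C) *v x"
    using block(1) by simp
  also have "\<dots> = transpose D *v (A *v x) - transpose B *v (C *v x)"
    by (simp add: matrix_vector_mult_diff_rdistrib matrix_vector_mul_assoc)
  also have "\<dots> = transpose D *v (B *v z) - transpose B *v (C *v x)"
    using assms(3) by simp
  also have "\<dots> = transpose B *v (D *v z - C *v x)"
    using block(2)
    by (simp add: matrix_vector_mul_assoc matrix_vector_mult_diff_distrib)
  finally have "x \<in> mat_range (transpose B)"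
    by (auto simp: mat_range_def)
  with assms(2) show ?thesis
    using mat_ker_Int_range_transpose[of B] by (auto simp: mat_ker_def)
qed

lemma symplectic_block_inj_on_ker:
  fixes A B C D :: "real^'n::finite^'n"
  assumes "symplectic (block_mat A B C D)"
  shows "inj_on ((*v) A) (mat_ker B)"
proof (rule inj_onI)
  fix x y assume "x \<in> mat_ker B" "y \<in> mat_ker B" "A *v x = A *v y"
  then have "B *v (x - y) = 0" "A *v (x - y) = B *v 0"
    by (auto simp: mat_ker_def matrix_vector_mult_diff_distrib)
  then have "x - y = 0"
    by (rule symplectic_block_ker_range_trivial[OF assms])
  then show "x = y"
    by simp
qed

lemma symplectic_block_range_Int_image_ker:
  fixes A B C D :: "real^'n::finite^'n"
  assumes "symplectic (block_mat A B C D)"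
  shows "mat_range B \<inter> (\<lambda>x. A *v x) ` mat_ker B = {0}"
proof -
  have "y = 0" if "y \<in> mat_range B" "y \<in> (\<lambda>x. A *v x) ` mat_ker B" for y
  proof -
    from that(1) obtain z where "y = B *v z"
      by (auto simp: mat_range_def)
    from that(2) obtain x where "B *v x = 0" "y = A *v x"
      by (auto simp: mat_ker_def)
    have "A *v x = B *v z"
      using \<open>y = A *v x\<close> \<open>y = B *v z\<close> by simp
    with \<open>B *v x = 0\<close> have "x = 0"
      by (rule symplectic_block_ker_range_trivial[OF assms])
    with \<open>y = A *v x\<close> show ?thesis by simp
  qed
  moreover have "0 \<in> (\<lambda>x. A *v x) ` mat_ker B"
    using imageI[OF subspace_0[OF subspace_mat_ker], of "(*v) A"] by simp
  ultimately show ?thesis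
    using subspace_0[OF subspace_mat_range] by blast
qed

theorem lemma3p4:
  fixes A B C D :: "real^'n::finite^'n"
  assumes "symplectic (block_mat A B C D)"
  shows "direct_sum_of (UNIV :: (real^'n) set) (mat_range B) ((\<lambda>x. A *v x) ` mat_ker B)"
proof (rule direct_sum_of_UNIV_by_dim)
  show "subspace (mat_range B)"
    by (rule subspace_mat_range)
  show "subspace ((\<lambda>x. A *v x) ` mat_ker B)"
    by (rule linear_subspace_image[OF _ subspace_mat_ker]) simp
  show "mat_range B \<inter> (\<lambda>x. A *v x) ` mat_ker B = {0}"
    using assms by (rule symplectic_block_range_Int_image_ker)
  have "dim ((\<lambda>x. A *v x) ` mat_ker B) = dim (mat_ker B)"
  proof (rule dim_image_eq)
    show "inj_on ((*v) A) (span (mat_ker B))"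
      unfolding span_eq_iff[THEN iffD2, OF subspace_mat_ker]
      using assms by (rule symplectic_block_inj_on_ker)
  qed simp
  then show "dim (mat_range B) + dim ((\<lambda>x. A *v x) ` mat_ker B) = DIM(real^'n)"
    using dim_mat_ker_add_dim_mat_range[of B] by simp
qed

end
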